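(* For integers $n\ge0$ and $0\le i\le n/2$ let $g(i,n)=\binom{2(n-i)}{n-i}^2\binom{n-i}{i}$. Let $p$ be an odd prime, $m,r$ positive integers, and $j$ an integer with $0\le j\le mp^{r-1}/2$. Then $$g(jp,mp^r)\equiv g(j,mp^{r-1})\pmod{p^r}.$$ *)

theory Defs
  imports "HOL-Number_Theory.Number_Theory"
begin

definition g :: "nat \<Rightarrow> nat \<Rightarrow> nat" where
  "g i n = ((2 * (n - i)) choose (n - i))^2 * ((n - i) choose i)"

end

theory Submission
  imports Defs
begin

text \<open>
  Write (pa)! = p^a a! F(a), where F(a) is the product of the integers in {1..pa} prime
  to p. Expanding the binomials gives g(pj, p(n+j)) D = g(j, n+j) U exactly, for the units
  U = F(2n)^2 and D = F(n)^3 F(j) F(n-j). The factors of F come in blocks of p - 1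
  consecutive integers, and modulo p^(s+1) the product of a block is periodic in the block
  index with period p^s; hence U = D (mod p^(s+1)) whenever p^s divides j and n.
  The remaining powers of p come from g(j, n+j) itself: it is a multiple of the binomial
  coefficient (n+j choose j), hence of p^(R - v(j)) when p^R divides n+j, v(j) being the
  multiplicity of p in j.
\<close>

definition unit_fact :: "nat \<Rightarrow> nat \<Rightarrow> nat" where
  "unit_fact p a = (\<Prod>t<a. \<Prod>i\<in>{1..<p}. p * t + i)"

lemma unit_fact_gt_0: "unit_fact p a > 0"
  unfolding unit_fact_def by (simp add: prod_pos)

lemma fact_add_eq_fact_mult_prod:
  "fact (x + k) = (fact x :: nat) * (\<Prod>i\<in>{1..k}. x + i)"
proof (induction k)
  case (Suc k)
  have "{1..Suc k} = insert (Suc k) {1..k}" by auto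
  then show ?case using Suc by (simp add: ac_simps)
qed simp

lemma fact_mult_eq_unit_fact:
  assumes "p > 0"
  shows "fact (p * a) = p ^ a * fact a * unit_fact p a"
proof (induction a)
  case 0
  then show ?case by (simp add: unit_fact_def)
next
  case (Suc a)
  have "{1..p} = insert p {1..<p}" using assms by auto
  then have "(\<Prod>i\<in>{1..p}. p * a + i) = (p * a + p) * (\<Prod>i\<in>{1..<p}. p * a + i)"
    by simp
  moreover have "fact (p * Suc a) = (fact (p * a) :: nat) * (\<Prod>i\<in>{1..p}. p * a + i)"
    using fact_add_eq_fact_mult_prod[of "p * a" p] by (simp add: add.commute)
  ultimately show ?case using Suc by (simp add: unit_fact_def algebra_simps)
qed

lemma prime_not_dvd_unit_fact:
  assumes "prime p"
  shows "\<not> p dvd unit_fact p a"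
proof
  assume "p dvd unit_fact p a"
  then obtain t i where "i \<in> {1..<p}" "p dvd p * t + i"
    using assms unfolding unit_fact_def by (auto simp: prime_dvd_prod_iff)
  then show False by (auto simp: dvd_add_right_iff dest: dvd_imp_le)
qed

lemma coprime_unit_fact_prime:
  assumes "prime p"
  shows "coprime (unit_fact p a) p"
  using prime_not_dvd_unit_fact[OF assms] assms by (simp add: coprime_commute prime_imp_coprime)

lemma unit_fact_add:
  "unit_fact p (a + b) = unit_fact p a * (\<Prod>t<b. \<Prod>i\<in>{1..<p}. p * (a + t) + i)"
  by (induction b) (simp_all add: unit_fact_def)

lemma unit_fact_block_cong:
  "[(\<Prod>t<b. \<Prod>i\<in>{1..<p}. p * (c * p ^ s + t) + i) = unit_fact p b] (mod p ^ Suc s)"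
  unfolding unit_fact_def
proof (intro cong_prod)
  fix t i
  have "p * (c * p ^ s + t) + i = (p * t + i) + c * p ^ Suc s"
    by (simp add: algebra_simps)
  moreover have "[(p * t + i) + c * p ^ Suc s = p * t + i] (mod p ^ Suc s)"
    unfolding cong_def by simp
  ultimately show "[p * (c * p ^ s + t) + i = p * t + i] (mod p ^ Suc s)"
    by (simp only:)
qed

lemma unit_fact_mult_prime_power_cong:
  "[unit_fact p (c * p ^ s) = unit_fact p (p ^ s) ^ c] (mod p ^ Suc s)"
proof (induction c)
  case 0
  then show ?case by (simp add: unit_fact_def)
next
  case (Suc c)
  have "unit_fact p (Suc c * p ^ s) =
      unit_fact p (c * p ^ s) * (\<Prod>t<p ^ s. \<Prod>i\<in>{1..<p}. p * (c * p ^ s + t) + i)"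
    using unit_fact_add[of p "c * p ^ s" "p ^ s"] by (simp add: add.commute)
  then show ?case
    using cong_mult[OF Suc unit_fact_block_cong] by (simp add: ac_simps)
qed

lemma unit_fact_add_cong:
  assumes "p ^ s dvd a" and "p ^ s dvd b"
  shows "[unit_fact p (a + b) = unit_fact p a * unit_fact p b] (mod p ^ Suc s)"
proof -
  obtain a' b' where a: "a = a' * p ^ s" and b: "b = b' * p ^ s"
    using assms unfolding dvd_def by (auto simp: mult.commute)
  have "a + b = (a' + b') * p ^ s" unfolding a b by (simp add: algebra_simps)
  then have "[unit_fact p (a + b) = unit_fact p (p ^ s) ^ (a' + b')] (mod p ^ Suc s)"
    using unit_fact_mult_prime_power_cong by simp
  moreover have "[unit_fact p a * unit_fact p b = unit_fact p (p ^ s) ^ (a' + b')] (mod p ^ Suc s)"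
    unfolding a b power_add by (intro cong_mult unit_fact_mult_prime_power_cong)
  ultimately show ?thesis using cong_sym cong_trans by blast
qed

lemma binomial_mult_unit_fact:
  assumes "p > 0" and "a \<le> b"
  shows "(p * b choose p * a) * unit_fact p a * unit_fact p (b - a) = (b choose a) * unit_fact p b"
proof -
  define P where "P = p ^ a * fact a * p ^ (b - a) * fact (b - a)"
  have P0: "P \<noteq> 0" using assms(1) unfolding P_def by simp
  have "fact (p * b) = fact (p * a) * fact (p * (b - a)) * (p * b choose p * a)"
    using binomial_fact_lemma[of "p * a" "p * b"] assms by (simp add: diff_mult_distrib2)
  also have "\<dots> = P * ((p * b choose p * a) * unit_fact p a * unit_fact p (b - a))"
    unfolding P_def fact_mult_eq_unit_fact[OF assms(1)] by (simp only: ac_simps)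
  finally have lhs:
    "fact (p * b) = P * ((p * b choose p * a) * unit_fact p a * unit_fact p (b - a))" .
  have "fact (p * b) = p ^ b * (fact a * fact (b - a) * (b choose a)) * unit_fact p b"
    using fact_mult_eq_unit_fact[OF assms(1)] binomial_fact_lemma[OF assms(2)] by simp
  also have "p ^ b = p ^ a * p ^ (b - a)" using assms(2) by (simp flip: power_add)
  finally have rhs: "fact (p * b) = P * ((b choose a) * unit_fact p b)"
    unfolding P_def by (simp only: ac_simps)
  show ?thesis using lhs rhs P0 by simp
qed
lemma prime_power_dvd_binomial:
  fixes p :: nat
  assumes "prime p" and "p ^ k dvd N" and "j \<noteq> 0"
  shows "p ^ (k - multiplicity p j) dvd (N choose j)"
proof -
  define v where "v = multiplicity p j"
  have "\<not> is_unit p" using assms(1) not_prime_unit by blast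
  then obtain j' where j: "j = p ^ v * j'" and "\<not> p dvd j'"
    using multiplicity_decompose'[of j p] assms(3) unfolding v_def by blast
  show ?thesis
  proof (cases "k \<le> v")
    case False
    have "p ^ k dvd j * (N choose j)"
      using times_binomial_minus1_eq[of j N] assms(2,3) by simp
    then have "p ^ v * p ^ (k - v) dvd p ^ v * (j' * (N choose j))"
      using False unfolding j by (simp add: mult.assoc flip: power_add)
    then have "p ^ (k - v) dvd j' * (N choose j)"
      using assms(1) by (simp add: prime_gt_0_nat)
    moreover have "coprime (p ^ (k - v)) j'"
      using assms(1) \<open>\<not> p dvd j'\<close> by (simp add: prime_imp_coprime coprime_power_left_iff)
    ultimately show ?thesis unfolding v_def by (simp add: coprime_dvd_mult_right_iff)
  qed (simp add: v_def)
qed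

lemma g_eq_mult_binomial:
  assumes "j \<le> n"
  shows "g j (n + j) = (2 * n choose n) * (2 * n choose (n + j)) * ((n + j) choose j)"
proof -
  have "(2 * n choose n) * (n choose j) = (2 * n choose (n + j)) * ((n + j) choose n)"
    using choose_mult[of n "n + j" "2 * n"] assms by simp
  moreover have "(n + j) choose n = (n + j) choose j"
    using binomial_symmetric[of n "n + j"] by simp
  ultimately show ?thesis unfolding g_def by (simp add: power2_eq_square)
qed

lemma prime_power_dvd_g:
  fixes p :: nat
  assumes "prime p" and "p ^ k dvd n + j" and "j \<noteq> 0" and "j \<le> n"
  shows "p ^ (k - multiplicity p j) dvd g j (n + j)"
  using prime_power_dvd_binomial[OF assms(1-3)] g_eq_mult_binomial[OF assms(4)] by simp

lemma g_mult_prime_unit_fact: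
  assumes "p > 0" and "j \<le> n"
  shows "g (p * j) (p * (n + j)) * (unit_fact p n ^ 3 * unit_fact p j * unit_fact p (n - j))
       = g j (n + j) * unit_fact p (n + n) ^ 2"
proof -
  define u where "u = unit_fact p n"
  have central: "(p * (n + n) choose p * n) * u * u = ((n + n) choose n) * unit_fact p (n + n)"
    using binomial_mult_unit_fact[OF assms(1), of n "n + n"] unfolding u_def by simp
  have inner: "(p * n choose p * j) * unit_fact p j * unit_fact p (n - j) = (n choose j) * u"
    using binomial_mult_unit_fact[OF assms] unfolding u_def .
  have "p * (n + j) - p * j = p * n" by (simp add: algebra_simps)
  then have "g (p * j) (p * (n + j)) * (u ^ 3 * unit_fact p j * unit_fact p (n - j)) * u
      = ((p * (n + n) choose p * n) * u * u) ^ 2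
        * ((p * n choose p * j) * unit_fact p j * unit_fact p (n - j))"
    unfolding g_def by (simp add: mult_2 distrib_left power2_eq_square eval_nat_numeral ac_simps)
  also have "\<dots> = g j (n + j) * unit_fact p (n + n) ^ 2 * u"
    unfolding central inner g_def by (simp add: mult_2 mult_2_right power2_eq_square ac_simps)
  finally show ?thesis
    using unit_fact_gt_0[of p n] unfolding u_def by simp
qed

lemma g_mult_prime_cong_of_dvd:
  fixes p :: nat
  assumes "prime p" and "j \<le> n" and "p ^ s dvd j" and "p ^ s dvd n"
    and "p ^ k dvd g j (n + j)"
  shows "[g (p * j) (p * (n + j)) = g j (n + j)] (mod p ^ (k + Suc s))"
proof -
  define U where "U = unit_fact p (n + n) ^ 2"
  define D where "D = unit_fact p n ^ 3 * unit_fact p j * unit_fact p (n - j)"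
  have exact: "g (p * j) (p * (n + j)) * D = g j (n + j) * U"
    unfolding U_def D_def using g_mult_prime_unit_fact[OF prime_gt_0_nat[OF assms(1)] assms(2)] .
  have "p ^ s dvd n - j" using assms(4,3) by (rule dvd_diff_nat)
  then have "[unit_fact p n = unit_fact p j * unit_fact p (n - j)] (mod p ^ Suc s)"
    using unit_fact_add_cong[OF assms(3)] assms(2) by fastforce
  then have "[D = unit_fact p n ^ 4] (mod p ^ Suc s)"
    unfolding D_def mult.assoc power_Suc2[of _ 3, simplified]
    by (rule cong_scalar_left[OF cong_sym])
  moreover have "[U = unit_fact p n ^ 4] (mod p ^ Suc s)"
    using cong_pow[OF unit_fact_add_cong[OF assms(4) assms(4)], of 2]
    unfolding U_def by (simp add: eval_nat_numeral mult.assoc)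
  ultimately have "[U = D] (mod p ^ Suc s)" using cong_sym cong_trans by blast
  then have "[c * U = c * D] (mod p ^ Suc s)" for c by (rule cong_scalar_left)
  then have "[p ^ k * (c * U) = p ^ k * (c * D)] (mod p ^ (k + Suc s))" for c
    unfolding cong_def power_add by (simp only: mod_mult_mult1)
  moreover obtain c where "g j (n + j) = p ^ k * c" using assms(5) by blast
  ultimately have "[g j (n + j) * U = g j (n + j) * D] (mod p ^ (k + Suc s))"
    by (simp add: mult.assoc)
  then have "[g (p * j) (p * (n + j)) * D = g j (n + j) * D] (mod p ^ (k + Suc s))"
    unfolding exact .
  moreover have "coprime D (p ^ (k + Suc s))"
    unfolding D_def using coprime_unit_fact_prime[OF assms(1)] by simp
  ultimately show ?thesis by (simp add: cong_mult_rcancel_nat)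
qed

lemma g_mult_prime_cong:
  fixes p :: nat
  assumes "prime p" and "j \<le> n" and "p ^ R dvd n + j"
  shows "[g (p * j) (p * (n + j)) = g j (n + j)] (mod p ^ Suc R)"
proof -
  obtain s where "s \<le> R" and psj: "p ^ s dvd j" and "p ^ (R - s) dvd g j (n + j)"
  proof (cases "j = 0")
    case True
    then show ?thesis using that[of R] by simp
  next
    case False
    define s where "s = min (multiplicity p j) R"
    have "p ^ s dvd j"
      unfolding s_def by (rule dvd_trans[OF le_imp_power_dvd multiplicity_dvd]) simp
    moreover have "R - s = R - multiplicity p j" unfolding s_def by simp
    ultimately show ?thesis
      using that[of s] prime_power_dvd_g[OF assms(1,3) False assms(2)] unfolding s_def by simp
  qed
  moreover have "p ^ s dvd n"
  proof -
    have "p ^ s dvd n + j" using assms(3) \<open>s \<le> R\<close> by (meson dvd_trans le_imp_power_dvd)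
    then show ?thesis using psj by (simp add: dvd_add_left_iff)
  qed
  ultimately have "[g (p * j) (p * (n + j)) = g j (n + j)] (mod p ^ (R - s + Suc s))"
    using g_mult_prime_cong_of_dvd[OF assms(1,2)] by blast
  then show ?thesis using \<open>s \<le> R\<close> by simp
qed

theorem mainTheorem15:
  fixes p m r j :: nat
  assumes "prime p" and "odd p" and "m > 0" and "r > 0"
    and "2 * j \<le> m * p ^ (r - 1)"
  shows "[g (j * p) (m * p ^ r) = g j (m * p ^ (r - 1))] (mod p ^ r)"
proof -
  define n where "n = m * p ^ (r - 1) - j"
  have "j \<le> n" and N: "m * p ^ (r - 1) = n + j"
    using assms(5) unfolding n_def by linarith+
  then have "[g (p * j) (p * (n + j)) = g j (n + j)] (mod p ^ Suc (r - 1))"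
    using g_mult_prime_cong[OF assms(1)] by (metis dvd_triv_right)
  moreover have "m * p ^ r = p * (n + j)"
    using assms(4) N by (cases r) (simp_all add: ac_simps)
  ultimately show ?thesis using N assms(4) by (simp add: mult.commute[of j p])
qed

end
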